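(* Let $p>2$ be a finite integer. For each $n\ge2$ let non-negative numbers ${p_j^n}'$, ${p_j^n}''$ ($j=1,\dots,n$) and $p^n_{OPT}$ be given with $p^n_{OPT}+\sum_{j=1}^n{p_j^n}'+\sum_{j=1}^n{p_j^n}''=1$. Let $f$ be the randomized mechanism which, on a reported profile ${\bf x}=(x_1,\dots,x_n)$, locates the facility at $OPT({\bf x})$ with probability $p^n_{OPT}$, at $x_j$ with probability ${p_j^n}'$, and at $x_{[j]}$ with probability ${p_j^n}''$ (probabilities of coinciding locations add up), where $x_{[j]}$ is the $j$-th largest component of ${\bf x}$ and $OPT({\bf x})$ is the unique minimizer over $y\in\mathbb{R}$ of $\sum_i|x_i-y|^p$. If $f$ is strategyproof, then the approximation ratio of $f$ is at least $2^{1-\frac1p}$.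
   Context: A randomized mechanism maps each profile ${\bf x}\in\mathbb{R}^n$ (for each $n\ge2$) to a probability distribution $\pi$ on $\mathbb{R}$; the facility location $y$ is drawn from $\pi$. Agent $i$ located at $x_i$ has cost $C(x_i,\pi)=\mathbb{E}_{y\sim\pi}|x_i-y|$. The mechanism is strategyproof if for every $n$, every agent $i$, all $x_i,x_i'\in\mathbb{R}$ and all ${\bf x}_{-i}$: $C(x_i,f(x_i,{\bf x}_{-i}))\le C(x_i,f(x_i',{\bf x}_{-i}))$. The social cost is $sc({\bf x},\pi)=\mathbb{E}_{y\sim\pi}\big(\sum_i|x_i-y|^p\big)^{1/p}$, and the approximation ratio of $f$ is $\sup sc({\bf x},f({\bf x}))/\min_{y}sc({\bf x},y)$, the supremum taken over all $n\ge 2$ and all profiles ${\bf x}\in\mathbb{R}^n$ (with $0/0=1$, $c/0=\infty$ for $c>0$). *)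

theory Defs
  imports "HOL-Analysis.Analysis" "HOL-Library.Extended_Real"
begin

text \<open>Profiles of n agents are functions nat => real; only the indices 0..n-1 matter.\<close>

definition lp_obj :: "nat \<Rightarrow> nat \<Rightarrow> (nat \<Rightarrow> real) \<Rightarrow> real \<Rightarrow> real" where
  "lp_obj p n x y = (\<Sum>i<n. \<bar>x i - y\<bar> ^ p)"

definition OPT :: "nat \<Rightarrow> nat \<Rightarrow> (nat \<Rightarrow> real) \<Rightarrow> real" where
  "OPT p n x = (THE y. \<forall>z. lp_obj p n x y \<le> lp_obj p n x z)"

text \<open>x_[j]: the j-th largest component (0-indexed here: j = 0 is the largest).\<close>
definition kth_largest :: "nat \<Rightarrow> (nat \<Rightarrow> real) \<Rightarrow> nat \<Rightarrow> real" where
  "kth_largest n x j = rev (sort (map x [0..<n])) ! j"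

definition mech_exp :: "nat \<Rightarrow> (nat \<Rightarrow> real) \<Rightarrow> (nat \<Rightarrow> nat \<Rightarrow> real) \<Rightarrow> (nat \<Rightarrow> nat \<Rightarrow> real)
    \<Rightarrow> nat \<Rightarrow> (nat \<Rightarrow> real) \<Rightarrow> (real \<Rightarrow> real) \<Rightarrow> real" where
  "mech_exp p pO p1 p2 n x g =
     pO n * g (OPT p n x) + (\<Sum>j<n. p1 n j * g (x j)) + (\<Sum>j<n. p2 n j * g (kth_largest n x j))"

definition strategyproof :: "nat \<Rightarrow> (nat \<Rightarrow> real) \<Rightarrow> (nat \<Rightarrow> nat \<Rightarrow> real) \<Rightarrow> (nat \<Rightarrow> nat \<Rightarrow> real) \<Rightarrow> bool" where
  "strategyproof p pO p1 p2 \<longleftrightarrow>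
     (\<forall>n\<ge>2. \<forall>i<n. \<forall>x v.
        mech_exp p pO p1 p2 n x (\<lambda>y. \<bar>x i - y\<bar>)
          \<le> mech_exp p pO p1 p2 n (x(i := v)) (\<lambda>y. \<bar>x i - y\<bar>))"

definition sc_pt :: "nat \<Rightarrow> nat \<Rightarrow> (nat \<Rightarrow> real) \<Rightarrow> real \<Rightarrow> real" where
  "sc_pt p n x y = root p (lp_obj p n x y)"

definition ratio :: "real \<Rightarrow> real \<Rightarrow> ereal" where
  "ratio a b = (if b = 0 then (if a = 0 then 1 else \<infinity>) else ereal (a / b))"

definition approx_ratio :: "nat \<Rightarrow> (nat \<Rightarrow> real) \<Rightarrow> (nat \<Rightarrow> nat \<Rightarrow> real) \<Rightarrow> (nat \<Rightarrow> nat \<Rightarrow> real) \<Rightarrow> ereal" where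
  "approx_ratio p pO p1 p2 =
     (SUP nx \<in> {(n, x). (n::nat) \<ge> 2}.
        ratio (mech_exp p pO p1 p2 (fst nx) (snd nx) (sc_pt p (fst nx) (snd nx)))
              (INF y. sc_pt p (fst nx) (snd nx) y))"

end

theory Submission
  imports Defs
begin

(* 1. The objective sum_i |x_i - y|^p is strictly convex with derivative p * S(y), where
      S(y) = sum_i s(y - x_i) and s(t) = t|t|^(p-2) is strictly increasing; hence OPT(x) is
      the unique zero of S, and the sign of S at a point tells on which side OPT lies.
   2. Test profiles: m agents at -2, one agent i at -1, k agents at 0, one at 1, m at 2
      (n = 2m+k+2).  By symmetry OPT = 0.  If agent i misreports -1-h with h = 1/(2(k+1)),
      OPT moves left by at least h/(4*3^(p-2)*(m+1)) but stays right of -1, while the only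
      lottery outcomes that move are agent i's own report and the order statistic x_[n-1-m],
      each by h.  Strategyproofness thus yields
         pO(n) <= 4*3^(p-2)*(m+1) * (p1(n,i) + p2(n, n-1-m)).
   3. Summing over m (with i the least likely dictator) gives pO(n) * H(n div 2) <= 8*3^(p-2),
      so pO(n) -> 0 since the harmonic numbers diverge.
   4. On the profile with K agents at 0 and K at 1, every outcome except OPT = 1/2 has ratio
      2^(1-1/p), so the approximation ratio is >= pO + (1-pO) 2^(1-1/p); let K -> infinity. *)

subsection \<open>The signed power and the derivative of the objective\<close>

text \<open>The signed power s(t) = t|t|^(p-2); p * s is the derivative of |t|^p.\<close>
definition spow :: "nat \<Rightarrow> real \<Rightarrow> real" where
  "spow p t = t * \<bar>t\<bar> ^ (p - 2)"

lemma spow_nonneg_eq: "2 \<le> p \<Longrightarrow> 0 \<le> t \<Longrightarrow> spow p t = t ^ (p - 1)"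
proof -
  assume "2 \<le> p" and "0 \<le> t"
  then have "p - 1 = Suc (p - 2)" by arith
  then show ?thesis using \<open>0 \<le> t\<close> by (simp add: spow_def)
qed

lemma spow_nonpos_eq: "2 \<le> p \<Longrightarrow> t \<le> 0 \<Longrightarrow> spow p t = - ((- t) ^ (p - 1))"
proof -
  assume "2 \<le> p" and "t \<le> 0"
  then have "p - 1 = Suc (p - 2)" by arith
  then show ?thesis using \<open>t \<le> 0\<close> by (simp add: spow_def)
qed

lemma spow_zero [simp]: "2 \<le> p \<Longrightarrow> spow p 0 = 0"
  by (simp add: spow_def)

lemma spow_odd: "spow p (- t) = - spow p t"
  by (simp add: spow_def)

lemma spow_strict_mono:
  assumes p: "2 \<le> p" and st: "s < t"
  shows "spow p s < spow p t"
proof -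
  have q: "p - 1 \<noteq> 0" using p by arith
  consider "0 \<le> s" | "s < 0" "0 \<le> t" | "t < 0" using st by linarith
  then show ?thesis
  proof cases
    case 1
    then show ?thesis using spow_nonneg_eq[OF p, of s] spow_nonneg_eq[OF p, of t] st q
      by (simp add: power_strict_mono)
  next
    case 2
    then have "0 < (- s) ^ (p - 1)" "0 \<le> t ^ (p - 1)" by simp_all
    then have "- ((- s) ^ (p - 1)) < t ^ (p - 1)" by linarith
    then show ?thesis using spow_nonpos_eq[OF p, of s] spow_nonneg_eq[OF p, of t] 2 by simp
  next
    case 3
    then have "(- t) ^ (p - 1) < (- s) ^ (p - 1)" using st q by (intro power_strict_mono) auto
    then show ?thesis using spow_nonpos_eq[OF p, of s] spow_nonpos_eq[OF p, of t] 3 st by simp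
  qed
qed

lemma spow_mono: "2 \<le> p \<Longrightarrow> s \<le> t \<Longrightarrow> spow p s \<le> spow p t"
  using spow_strict_mono[of p s t] by (cases "s = t") auto

lemma continuous_on_spow: "continuous_on S (spow p)"
  unfolding spow_def by (intro continuous_intros)

lemma has_real_derivative_abs_power:
  assumes p: "2 \<le> p"
  shows "((\<lambda>t. \<bar>t\<bar> ^ p) has_real_derivative (real p * spow p t)) (at t)"
proof -
  consider "t = 0" | "0 < t" | "t < 0" by linarith
  then show ?thesis
  proof cases
    case 1
    have split_power: "\<bar>h\<bar> ^ p = \<bar>h\<bar> * \<bar>h\<bar> ^ (p - 1)" for h :: real
      using p by (metis Suc_diff_1 less_le_trans pos2 power_Suc)
    have "((\<lambda>h::real. \<bar>h\<bar> ^ (p - 1)) \<longlongrightarrow> \<bar>0\<bar> ^ (p - 1)) (at 0)"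
      by (intro tendsto_intros)
    then have "((\<lambda>h::real. \<bar>h\<bar> ^ (p - 1)) \<longlongrightarrow> 0) (at 0)"
      using p by (simp add: zero_power)
    then have "((\<lambda>h::real. (\<bar>0 + h\<bar> ^ p - \<bar>0\<bar> ^ p) / h) \<longlongrightarrow> 0) (at 0)"
      by (rule Lim_null_comparison[rotated], intro always_eventually allI)
         (use p in \<open>auto simp: split_power abs_mult zero_power\<close>)
    then show ?thesis using 1 p by (simp add: DERIV_def spow_def)
  next
    case 2
    have "((\<lambda>t. t ^ p) has_real_derivative (real p * t ^ (p - 1))) (at t)"
      using DERIV_pow[of p t] by simp
    then have "((\<lambda>t. t ^ p) has_real_derivative (real p * spow p t)) (at t)"
      using 2 spow_nonneg_eq[OF p, of t] by simp
    then show ?thesis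
      by (rule has_field_derivative_transform_within_open[of _ _ _ "{0<..}"]) (use 2 in auto)
  next
    case 3
    have "((\<lambda>t. (- t) ^ p) has_real_derivative (real p * (- t) ^ (p - 1) * (- 1))) (at t)"
      by (rule derivative_eq_intros refl | simp)+
    then have "((\<lambda>t. (- t) ^ p) has_real_derivative (real p * spow p t)) (at t)"
      using 3 spow_nonpos_eq[OF p, of t] by simp
    then show ?thesis
      by (rule has_field_derivative_transform_within_open[of _ _ _ "{..<0}"]) (use 3 in auto)
  qed
qed

definition lp_slope :: "nat \<Rightarrow> nat \<Rightarrow> (nat \<Rightarrow> real) \<Rightarrow> real \<Rightarrow> real" where
  "lp_slope p n x y = (\<Sum>i<n. spow p (y - x i))"

lemma lp_obj_has_derivative:
  assumes p: "2 \<le> p"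
  shows "(lp_obj p n x has_real_derivative (real p * lp_slope p n x y)) (at y)"
proof -
  have term_deriv: "((\<lambda>y. \<bar>x i - y\<bar> ^ p) has_real_derivative (real p * spow p (y - x i))) (at y)" for i
  proof -
    have "((\<lambda>y. \<bar>y - x i\<bar> ^ p) has_real_derivative (real p * spow p (y - x i)) * 1) (at y)"
      by (rule DERIV_chain2[OF has_real_derivative_abs_power[OF p]])
         (rule derivative_eq_intros refl | simp)+
    then show ?thesis by (simp add: abs_minus_commute)
  qed
  show ?thesis
    using DERIV_sum[of "{..<n}", OF term_deriv]
    by (simp add: lp_obj_def[abs_def] lp_slope_def sum_distrib_left)
qed

lemma lp_slope_mono: "2 \<le> p \<Longrightarrow> y \<le> z \<Longrightarrow> lp_slope p n x y \<le> lp_slope p n x z"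
  unfolding lp_slope_def by (intro sum_mono spow_mono) auto

lemma lp_slope_strict_mono: "2 \<le> p \<Longrightarrow> 0 < n \<Longrightarrow> y < z \<Longrightarrow> lp_slope p n x y < lp_slope p n x z"
  unfolding lp_slope_def by (intro sum_strict_mono spow_strict_mono) auto

subsection \<open>OPT is the zero of the slope\<close>

text \<open>A zero of the slope is a strict global minimiser (mean value theorem on each side).\<close>
lemma lp_obj_strict_min_at_slope_zero:
  assumes p: "2 \<le> p" and n: "0 < n" and y0: "lp_slope p n x y0 = 0" and z: "z \<noteq> y0"
  shows "lp_obj p n x y0 < lp_obj p n x z"
proof -
  have pp: "0 < real p" using p by simp
  have "\<exists>\<xi>. min y0 z < \<xi> \<and> \<xi> < max y0 z \<and>
      lp_obj p n x (max y0 z) - lp_obj p n x (min y0 z)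
        = (max y0 z - min y0 z) * (real p * lp_slope p n x \<xi>)"
    using MVT2[of "min y0 z" "max y0 z" "lp_obj p n x" "\<lambda>y. real p * lp_slope p n x y"]
      lp_obj_has_derivative[OF p] z by (simp add: min_def max_def)
  then obtain \<xi> where \<xi>: "min y0 z < \<xi>" "\<xi> < max y0 z"
    and mvt: "lp_obj p n x (max y0 z) - lp_obj p n x (min y0 z)
        = (max y0 z - min y0 z) * (real p * lp_slope p n x \<xi>)" by blast
  show ?thesis
  proof (cases "y0 < z")
    case True
    then have "0 < lp_slope p n x \<xi>" using lp_slope_strict_mono[OF p n, of y0 \<xi> x] y0 \<xi> by simp
    then have "0 < (z - y0) * (real p * lp_slope p n x \<xi>)" using True pp by simp
    moreover have "min y0 z = y0" "max y0 z = z" using True by auto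
    ultimately show ?thesis using mvt by simp
  next
    case False
    then have zy: "z < y0" using z by simp
    then have "lp_slope p n x \<xi> < 0" using lp_slope_strict_mono[OF p n, of \<xi> y0 x] y0 \<xi> by simp
    then have "(y0 - z) * (real p * lp_slope p n x \<xi>) < 0" using zy pp by (simp add: mult_pos_neg)
    moreover have "min y0 z = z" "max y0 z = y0" using zy by auto
    ultimately show ?thesis using mvt by simp
  qed
qed

text \<open>The slope has a zero between the smallest and the largest agent (intermediate values).\<close>
lemma lp_slope_has_zero:
  assumes p: "2 \<le> p" and n: "0 < n"
  shows "\<exists>y. lp_slope p n x y = 0"
proof -
  define a where "a = Min (x ` {..<n})"
  define b where "b = Max (x ` {..<n})"
  have a: "a \<le> x i" and b: "x i \<le> b" if "i < n" for i
    unfolding a_def b_def using that by (auto intro: Min_le Max_ge)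
  have "lp_slope p n x a \<le> 0" unfolding lp_slope_def
    by (rule sum_nonpos) (use spow_mono[OF p, of "a - x _" 0] a p in auto)
  moreover have "0 \<le> lp_slope p n x b" unfolding lp_slope_def
    by (rule sum_nonneg) (use spow_mono[OF p, of 0 "b - x _"] b p in auto)
  moreover have "continuous_on {a..b} (lp_slope p n x)"
    unfolding lp_slope_def[abs_def]
    by (intro continuous_intros continuous_on_compose2[OF continuous_on_spow[of UNIV p]]) auto
  ultimately show ?thesis using IVT'[of "lp_slope p n x" a 0 b] a[OF n] b[OF n] by force
qed

lemma OPT_eq_slope_zero:
  assumes p: "2 \<le> p" and n: "0 < n" and y0: "lp_slope p n x y0 = 0"
  shows "OPT p n x = y0"
  unfolding OPT_def
proof (rule the_equality)
  show "\<forall>z. lp_obj p n x y0 \<le> lp_obj p n x z"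
    using lp_obj_strict_min_at_slope_zero[OF p n y0] by (metis order.order_iff_strict)
next
  fix y assume "\<forall>z. lp_obj p n x y \<le> lp_obj p n x z"
  then have "lp_obj p n x y \<le> lp_obj p n x y0" by blast
  then show "y = y0" using lp_obj_strict_min_at_slope_zero[OF p n y0, of y] by (meson leD)
qed

lemma OPT_minimises:
  assumes p: "2 \<le> p" and n: "0 < n"
  shows "lp_obj p n x (OPT p n x) \<le> lp_obj p n x z"
proof -
  obtain y0 where y0: "lp_slope p n x y0 = 0" using lp_slope_has_zero[OF p n] by blast
  show ?thesis using OPT_eq_slope_zero[OF p n y0] lp_obj_strict_min_at_slope_zero[OF p n y0, of z]
    by (cases "z = y0") auto
qed

lemma OPT_less_if_slope_pos:
  assumes p: "2 \<le> p" and n: "0 < n" and s: "0 < lp_slope p n x s"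
  shows "OPT p n x < s"
proof -
  obtain y0 where y0: "lp_slope p n x y0 = 0" using lp_slope_has_zero[OF p n] by blast
  have "\<not> s \<le> y0" using lp_slope_mono[OF p, of s y0 n x] y0 s by force
  then show ?thesis using OPT_eq_slope_zero[OF p n y0] by simp
qed

lemma OPT_greater_if_slope_neg:
  assumes p: "2 \<le> p" and n: "0 < n" and s: "lp_slope p n x s < 0"
  shows "s < OPT p n x"
proof -
  obtain y0 where y0: "lp_slope p n x y0 = 0" using lp_slope_has_zero[OF p n] by blast
  have "\<not> y0 \<le> s" using lp_slope_mono[OF p, of y0 s n x] y0 s by force
  then show ?thesis using OPT_eq_slope_zero[OF p n y0] by simp
qed

subsection \<open>Profiles built from lists\<close>

definition swap_idx :: "nat \<Rightarrow> nat \<Rightarrow> nat \<Rightarrow> nat" where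
  "swap_idx i pos j = (if j = i then pos else if j = pos then i else j)"

text \<open>The profile listing the entries of A, permuted so that agent i reports the entry A ! pos.\<close>
definition prof :: "real list \<Rightarrow> nat \<Rightarrow> nat \<Rightarrow> nat \<Rightarrow> real" where
  "prof A i pos j = A ! swap_idx i pos j"

lemma swap_idx_involutive: "swap_idx i pos (swap_idx i pos j) = j"
  unfolding swap_idx_def by auto

lemma swap_idx_less: "i < n \<Longrightarrow> pos < n \<Longrightarrow> j < n \<Longrightarrow> swap_idx i pos j < n"
  unfolding swap_idx_def by auto

lemma bij_betw_swap_idx: "i < n \<Longrightarrow> pos < n \<Longrightarrow> bij_betw (swap_idx i pos) {..<n} {..<n}"
  by (rule bij_betw_byWitness[where f'="swap_idx i pos"])
     (auto simp: swap_idx_involutive swap_idx_less)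

lemma sum_prof:
  assumes "length A = n" "i < n" "pos < n"
  shows "(\<Sum>j<n. f (prof A i pos j)) = sum_list (map f A)"
proof -
  have "(\<Sum>j<n. f (A ! swap_idx i pos j)) = (\<Sum>j<n. f (A ! j))"
    using sum.reindex_bij_betw[OF bij_betw_swap_idx[OF assms(2,3)], of "\<lambda>j. f (A ! j)"] by simp
  also have "\<dots> = sum_list (map f A)"
    using assms(1) by (simp add: sum_list_sum_nth atLeast0LessThan)
  finally show ?thesis by (simp add: prof_def)
qed

lemma lp_slope_prof:
  "length A = n \<Longrightarrow> i < n \<Longrightarrow> pos < n \<Longrightarrow>
    lp_slope p n (prof A i pos) y = sum_list (map (\<lambda>a. spow p (y - a)) A)"
  unfolding lp_slope_def by (rule sum_prof)

lemma mset_prof: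
  assumes "length A = n" "i < n" "pos < n"
  shows "mset (map (prof A i pos) [0..<n]) = mset A"
proof -
  have "mset (map (prof A i pos) [0..<n]) = image_mset (\<lambda>j. A ! j) (image_mset (swap_idx i pos) (mset_set {..<n}))"
    by (simp add: prof_def[abs_def] multiset.map_comp o_def atLeast0LessThan)
  also have "image_mset (swap_idx i pos) (mset_set {..<n}) = mset_set {..<n}"
    using bij_betw_swap_idx[OF assms(2,3)] by (simp add: bij_betw_def image_mset_mset_set)
  also have "image_mset (\<lambda>j. A ! j) (mset_set {..<n}) = mset A"
    using assms(1) map_nth[of A] by (metis atLeast0LessThan mset_map mset_upt)
  finally show ?thesis .
qed

lemma kth_largest_prof:
  assumes "length A = n" "i < n" "pos < n" "sorted A"
  shows "kth_largest n (prof A i pos) j = rev A ! j"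
proof -
  have "sort (map (prof A i pos) [0..<n]) = A"
    by (rule properties_for_sort) (use mset_prof[OF assms(1-3)] assms(4) in auto)
  then show ?thesis by (simp add: kth_largest_def)
qed

lemma prof_self: "pos < length A \<Longrightarrow> prof A i pos i = A ! pos"
  by (simp add: prof_def swap_idx_def)

lemma prof_update:
  "pos < length A \<Longrightarrow> (prof A i pos)(i := c) = prof (A[pos := c]) i pos"
  by (auto simp: prof_def swap_idx_def)

lemma weighted_sum_update:
  fixes w :: "nat \<Rightarrow> real" and f :: "real \<Rightarrow> real"
  assumes "i < n"
  shows "(\<Sum>j<n. w j * f ((x(i := v)) j)) = (\<Sum>j<n. w j * f (x j)) + w i * (f v - f (x i))"
proof -
  have "(\<Sum>j<n. w j * f ((x(i := v)) j)) - (\<Sum>j<n. w j * f (x j))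
      = (\<Sum>j<n. w j * f ((x(i := v)) j) - w j * f (x j))"
    by (simp add: sum_subtractf)
  also have "\<dots> = (\<Sum>j\<in>{i}. w j * f ((x(i := v)) j) - w j * f (x j))"
    using assms by (intro sum.mono_neutral_right) auto
  finally show ?thesis by (simp add: algebra_simps)
qed

subsection \<open>Elementary estimates for the test profiles\<close>

text \<open>Mean-value bounds for b^q - a^q, via the factorisation of a difference of powers.\<close>
lemma power_diff_lower:
  fixes a b :: real
  assumes "0 \<le> a" "a \<le> b"
  shows "real q * a ^ (q - 1) * (b - a) \<le> b ^ q - a ^ q"
proof (cases q)
  case (Suc l)
  have "(\<Sum>j<Suc l. a ^ l) \<le> (\<Sum>j<Suc l. b ^ j * a ^ (l - j))"
  proof (rule sum_mono)
    fix j assume "j \<in> {..<Suc l}"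
    then have "a ^ l = a ^ j * a ^ (l - j)" by (simp add: power_add[symmetric])
    also have "\<dots> \<le> b ^ j * a ^ (l - j)" using assms by (intro mult_right_mono power_mono) auto
    finally show "a ^ l \<le> b ^ j * a ^ (l - j)" .
  qed
  then show ?thesis using Suc assms diff_power_eq_sum[of b l a]
    by (simp add: mult.commute mult.left_commute mult_left_mono)
qed simp

lemma power_diff_upper:
  fixes a b :: real
  assumes "0 \<le> a" "a \<le> b"
  shows "b ^ q - a ^ q \<le> real q * b ^ (q - 1) * (b - a)"
proof (cases q)
  case (Suc l)
  have "(\<Sum>j<Suc l. b ^ j * a ^ (l - j)) \<le> (\<Sum>j<Suc l. b ^ l)"
  proof (rule sum_mono)
    fix j assume "j \<in> {..<Suc l}"
    then have "b ^ l = b ^ j * b ^ (l - j)" by (simp add: power_add[symmetric])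
    moreover have "b ^ j * a ^ (l - j) \<le> b ^ j * b ^ (l - j)"
      using assms by (intro mult_left_mono power_mono) auto
    ultimately show "b ^ j * a ^ (l - j) \<le> b ^ l" by simp
  qed
  then show ?thesis using Suc assms diff_power_eq_sum[of b l a]
    by (simp add: mult.commute mult.left_commute mult_left_mono)
qed simp

text \<open>Gain of the slope from the misreporting agent: it is at distance 1+h-g instead of 1+g.\<close>
lemma slope_gain_lower:
  fixes g h :: real
  assumes "0 \<le> g" "2 * g \<le> h"
  shows "real q * (h - 2 * g) \<le> (1 + h - g) ^ q - (1 + g) ^ q"
proof -
  have "(h - 2 * g) \<le> (1 + g) ^ (q - 1) * (h - 2 * g)"
    using assms by (intro mult_le_cancel_right1[THEN iffD2]) simp
  then have "real q * (h - 2 * g) \<le> real q * (1 + g) ^ (q - 1) * ((1 + h - g) - (1 + g))"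
    by (simp add: mult.assoc mult_left_mono)
  also have "\<dots> \<le> (1 + h - g) ^ q - (1 + g) ^ q"
    by (rule power_diff_lower) (use assms in auto)
  finally show ?thesis .
qed

text \<open>Loss of the slope from a symmetric pair of agents at -2 and 2, evaluated at -g.\<close>
lemma slope_loss_upper:
  fixes g :: real
  assumes "0 \<le> g" "g \<le> 1"
  shows "(2 + g) ^ q - (2 - g) ^ q \<le> 2 * real q * 3 ^ (q - 1) * g"
proof -
  have "(2 + g) ^ q - (2 - g) ^ q \<le> real q * (2 + g) ^ (q - 1) * ((2 + g) - (2 - g))"
    by (rule power_diff_upper) (use assms in auto)
  also have "\<dots> \<le> real q * 3 ^ (q - 1) * (2 * g)"
  proof -
    have "(2 + g) ^ (q - 1) \<le> 3 ^ (q - 1)" using assms by (intro power_mono) auto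
    then show ?thesis using assms by (simp add: mult_right_mono mult_left_mono)
  qed
  finally show ?thesis by simp
qed

text \<open>Loss of the slope from the k agents at 0, evaluated at -g.\<close>
lemma slope_zeros_upper:
  fixes g h :: real
  assumes q: "2 \<le> q" and g: "0 \<le> g" "g \<le> h" and h: "h \<le> 1" and kh: "real k * h \<le> 1 / 2"
  shows "real k * g ^ q \<le> h / 2"
proof -
  have "g ^ q \<le> h * h"
    using power_decreasing[OF q, of g] power_mono[of g h 2] g h by (simp add: power2_eq_square)
  then have "real k * g ^ q \<le> real k * (h * h)" by (intro mult_left_mono) auto
  also have "\<dots> = (real k * h) * h" by simp
  also have "\<dots> \<le> (1 / 2) * h" using kh g by (intro mult_right_mono) auto
  finally show ?thesis by simp
qed

text \<open>The slope of the deviated test profile is positive at -g.  The shift h is small enough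
  to control the k agents at 0, and g is small enough to control the m pairs at -2 and 2.\<close>
lemma test_slope_inequality:
  fixes q m k :: nat and h g :: real
  assumes q: "2 \<le> q"
    and h: "h = 1 / (2 * (real k + 1))"
    and g: "g = h / (4 * 3 ^ (q - 1) * (real m + 1))"
  shows "0 < real m * (2 - g) ^ q + (1 + h - g) ^ q - real k * g ^ q - (1 + g) ^ q
            - real m * (2 + g) ^ q"
proof -
  define T :: real where "T = 3 ^ (q - 1)"
  have T: "1 \<le> T" "3 \<le> T" unfolding T_def using q power_increasing[of 1 "q - 1" "3::real"] by auto
  have hpos: "0 < h" and hle: "h \<le> 1 / 2" and kh: "real k * h \<le> 1 / 2"
    unfolding h by (auto simp: field_simps)
  have g': "g * (4 * T * (real m + 1)) = h" unfolding g T_def by simp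
  have gpos: "0 < g" unfolding g using hpos by simp
  have gh: "12 * g \<le> h"
  proof -
    have "12 * g \<le> (4 * T * g) * 1" using T gpos by simp
    also have "\<dots> \<le> (4 * T * g) * (real m + 1)" using T gpos by (intro mult_left_mono) auto
    finally show ?thesis using g' by (simp add: algebra_simps)
  qed
  have mg: "2 * real m * T * g \<le> h / 2"
  proof -
    have "h = 4 * T * g + 4 * (real m * T * g)" using g' by (simp add: algebra_simps)
    moreover have "0 \<le> T * g" using T gpos by simp
    ultimately show ?thesis by linarith
  qed
  have gain: "real q * (h - 2 * g) \<le> (1 + h - g) ^ q - (1 + g) ^ q"
    by (rule slope_gain_lower) (use gpos gh in auto)
  have loss: "real m * ((2 + g) ^ q - (2 - g) ^ q) \<le> real q * (h / 2)"
  proof -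
    have "real m * ((2 + g) ^ q - (2 - g) ^ q) \<le> real m * (2 * real q * T * g)"
      unfolding T_def using slope_loss_upper[of g q] gpos gh hle by (intro mult_left_mono) auto
    also have "\<dots> = real q * (2 * real m * T * g)" by simp
    also have "\<dots> \<le> real q * (h / 2)" using mg by (intro mult_left_mono) auto
    finally show ?thesis .
  qed
  have zeros: "real k * g ^ q \<le> h / 2"
    by (rule slope_zeros_upper[OF q]) (use gpos gh hle kh in auto)
  have "3 * h < 2 * (real q * h)" using q hpos by simp
  moreover have "real q * (12 * g) \<le> real q * h" using gh by (intro mult_left_mono) auto
  moreover have "real q * h - 2 * (real q * g) \<le> (1 + h - g) ^ q - (1 + g) ^ q"
    using gain by (simp add: algebra_simps)
  moreover have "real m * (2 + g) ^ q - real m * (2 - g) ^ q \<le> real q * h / 2"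
    using loss by (simp add: algebra_simps)
  ultimately show ?thesis using zeros by linarith
qed

subsection \<open>The test profiles and the strategyproofness constraint\<close>

text \<open>m agents at -2, one at c, k at 0, one at 1 and m at 2; the agent at c (position m) is
  the one who will misreport.\<close>
definition test_list :: "nat \<Rightarrow> nat \<Rightarrow> real \<Rightarrow> real list" where
  "test_list m k c = replicate m (-2) @ [c] @ replicate k 0 @ [1] @ replicate m 2"

lemma length_test_list [simp]: "length (test_list m k c) = 2 * m + k + 2"
  by (simp add: test_list_def)

lemma test_list_update: "(test_list m k c)[m := d] = test_list m k d"
  by (simp add: test_list_def list_update_append)

lemma sorted_test_list: "-2 \<le> c \<Longrightarrow> c \<le> 0 \<Longrightarrow> sorted (test_list m k c)"
  by (auto simp: test_list_def sorted_append)

lemma sum_test_list: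
  "sum_list (map f (test_list m k c)) = real m * f (-2) + f c + real k * f 0 + f 1 + real m * f 2"
  by (simp add: test_list_def sum_list_replicate)

lemma rev_test_list_nth:
  assumes "j < 2 * m + k + 2"
  shows "rev (test_list m k c) ! j
    = (if j = m + 1 + k then c else rev (test_list m k d) ! j)"
proof -
  have upd: "test_list m k c = (test_list m k d)[m := c]" by (simp add: test_list_update)
  have "rev (test_list m k c) ! j = test_list m k c ! (2 * m + k + 2 - Suc j)"
    using assms by (simp add: rev_nth)
  also have "\<dots> = (if j = m + 1 + k then c else test_list m k d ! (2 * m + k + 2 - Suc j))"
    unfolding upd using assms by (auto simp: nth_list_update)
  also have "\<dots> = (if j = m + 1 + k then c else rev (test_list m k d) ! j)"
    using assms by (simp add: rev_nth)
  finally show ?thesis .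
qed

lemma OPT_test_profile:
  assumes p: "2 \<le> p" and n: "n = 2 * m + k + 2" and i: "i < n"
  shows "OPT p n (prof (test_list m k (-1)) i m) = 0"
proof (rule OPT_eq_slope_zero[OF p])
  show "lp_slope p n (prof (test_list m k (-1)) i m) 0 = 0"
    using p n i by (simp add: lp_slope_prof sum_test_list spow_odd)
qed (use n in simp)

lemma OPT_deviated_test_profile:
  fixes h g :: real
  assumes p: "2 < p" and n: "n = 2 * m + k + 2" and i: "i < n"
    and h: "h = 1 / (2 * (real k + 1))"
    and g: "g = h / (4 * 3 ^ (p - 2) * (real m + 1))"
  shows "-1 < OPT p n (prof (test_list m k (-1 - h)) i m)"
    and "OPT p n (prof (test_list m k (-1 - h)) i m) < -g"
proof -
  define x' where "x' = prof (test_list m k (-1 - h)) i m"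
  define q where "q = p - 1"
  have p2: "2 \<le> p" and q2: "2 \<le> q" and np: "0 < n" using p n unfolding q_def by auto
  have hpos: "0 < h" and hlt: "h < 1" unfolding h by (auto simp: field_simps)
  have "(1::real) \<le> 4 * 3 ^ (p - 2)" using one_le_power[of "3::real" "p - 2"] by linarith
  then have D: "1 \<le> 4 * 3 ^ (p - 2) * (real m + 1)"
    using mult_mono[of 1 "4 * 3 ^ (p - 2)" 1 "real m + 1"] by simp
  have gpos: "0 < g" unfolding g using hpos D by simp
  have "g \<le> h" unfolding g using hpos D by (simp add: divide_le_eq mult_le_cancel_left1)
  then have gle: "g \<le> 1" using hlt by simp
  have slope: "lp_slope p n x' y = real m * spow p (y + 2) + spow p (y + 1 + h) + real k * spow p y
      + spow p (y - 1) + real m * spow p (y - 2)" for y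
    unfolding x'_def using n i by (simp add: lp_slope_prof sum_test_list algebra_simps)
  have "lp_slope p n x' (-1) = real m + h ^ q - real k - 2 ^ q - real m * 3 ^ q"
    using slope[of "-1"] hpos p2 spow_nonneg_eq[OF p2, of 1] spow_nonneg_eq[OF p2, of h]
      spow_nonpos_eq[OF p2, of "-1"] spow_nonpos_eq[OF p2, of "-2"] spow_nonpos_eq[OF p2, of "-3"]
    by (simp add: q_def)
  also have "\<dots> < 0"
  proof -
    have "h ^ q < 1" using hpos hlt q2 by (simp add: power_less_one_iff)
    moreover have "real m \<le> real m * 3 ^ q" using mult_left_mono[of 1 "(3::real) ^ q" "real m"] by simp
    ultimately show ?thesis using one_le_power[of "2::real" q] by linarith
  qed
  finally show "-1 < OPT p n x'" unfolding x'_def[symmetric]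
    by (rule OPT_greater_if_slope_neg[OF p2 np])
  have "lp_slope p n x' (-g)
      = real m * (2 - g) ^ q + (1 + h - g) ^ q - real k * g ^ q - (1 + g) ^ q - real m * (2 + g) ^ q"
    using slope[of "-g"] gpos gle hpos spow_nonneg_eq[OF p2, of "2 - g"] spow_nonneg_eq[OF p2, of "1 + h - g"]
      spow_nonpos_eq[OF p2, of "-g"] spow_nonpos_eq[OF p2, of "-g - 1"] spow_nonpos_eq[OF p2, of "-g - 2"]
    by (simp add: q_def algebra_simps)
  also have "\<dots> > 0"
    by (rule test_slope_inequality[OF q2 h]) (simp add: g q_def numeral_2_eq_2)
  finally show "OPT p n x' < -g"
    by (rule OPT_less_if_slope_pos[OF p2 np])
qed

text \<open>When agent i (truly at -1) reports -1-h instead, its expected cost changes only through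
  OPT, through its own report (weight p1 n i) and through the order statistic x_[n-1-m]
  (weight p2 n (n-1-m)); the last two move away from it by h.\<close>
lemma test_deviation_cost:
  fixes pO :: "nat \<Rightarrow> real" and p1 p2 :: "nat \<Rightarrow> nat \<Rightarrow> real" and h :: real
  assumes n: "n = 2 * m + k + 2" and i: "i < n" and h: "0 \<le> h" "h \<le> 1"
  defines "x \<equiv> prof (test_list m k (-1)) i m" and "x' \<equiv> prof (test_list m k (-1 - h)) i m"
  shows "mech_exp p pO p1 p2 n x' (\<lambda>y. \<bar>-1 - y\<bar>)
    = mech_exp p pO p1 p2 n x (\<lambda>y. \<bar>-1 - y\<bar>)
      + pO n * (\<bar>-1 - OPT p n x'\<bar> - \<bar>-1 - OPT p n x\<bar>) + (p1 n i + p2 n (n - 1 - m)) * h"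
proof -
  define v where "v = -1 - h"
  define r where "r = n - 1 - m"
  have mn: "m < n" and rn: "r < n" and r: "r = m + 1 + k" using n unfolding r_def by auto
  have xi: "x i = -1" unfolding x_def using mn n by (simp add: prof_self test_list_def nth_append)
  have deviate: "x(i := v) = x'" unfolding x_def x'_def v_def using mn n
    by (simp add: prof_update test_list_update)
  have kth: "kth_largest n x j = rev (test_list m k (-1)) ! j" for j
    unfolding x_def using n mn i by (intro kth_largest_prof sorted_test_list) auto
  have kth': "kth_largest n x' j = ((kth_largest n x)(r := v)) j" if "j < n" for j
  proof -
    have "kth_largest n x' j = rev (test_list m k v) ! j"
      unfolding x'_def v_def using n mn i h by (intro kth_largest_prof sorted_test_list) auto
    then show ?thesis unfolding fun_upd_apply kth using rev_test_list_nth[of j m k v "-1"] that n r by simp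
  qed
  have kth_r: "kth_largest n x r = -1"
    unfolding kth using rev_test_list_nth[of r m k "-1" "-1"] rn n r by simp
  have own: "(\<Sum>j<n. p1 n j * \<bar>-1 - x' j\<bar>) = (\<Sum>j<n. p1 n j * \<bar>-1 - x j\<bar>) + p1 n i * h"
    using weighted_sum_update[OF i, of "p1 n" "\<lambda>y. \<bar>-1 - y\<bar>" x v] h
    unfolding deviate xi by (simp add: v_def)
  have "(\<Sum>j<n. p2 n j * \<bar>-1 - kth_largest n x' j\<bar>)
      = (\<Sum>j<n. p2 n j * \<bar>-1 - ((kth_largest n x)(r := v)) j\<bar>)"
    using kth' by simp
  also have "\<dots> = (\<Sum>j<n. p2 n j * \<bar>-1 - kth_largest n x j\<bar>) + p2 n r * h"
    using weighted_sum_update[OF rn, of "p2 n" "\<lambda>y. \<bar>-1 - y\<bar>" "kth_largest n x" v] h kth_r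
    by (simp add: v_def)
  finally show ?thesis unfolding mech_exp_def r_def[symmetric] using own by (simp add: algebra_simps)
qed

text \<open>The strategyproofness constraint for agent i on a test profile: misreporting would move
  OPT towards agent i by more than g, and this gain (weight pO n) must not exceed the loss
  h * (p1 n i + p2 n (n - 1 - m)).\<close>
lemma strategyproof_test_bound:
  fixes pO :: "nat \<Rightarrow> real" and p1 p2 :: "nat \<Rightarrow> nat \<Rightarrow> real"
  assumes p: "2 < p" and SP: "strategyproof p pO p1 p2" and pO0: "0 \<le> pO n"
    and n: "n = 2 * m + k + 2" and i: "i < n"
  shows "pO n / (4 * 3 ^ (p - 2) * (real m + 1)) \<le> p1 n i + p2 n (n - 1 - m)"
proof -
  define h :: real where "h = 1 / (2 * (real k + 1))"
  define g :: real where "g = h / (4 * 3 ^ (p - 2) * (real m + 1))"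
  define x where "x = prof (test_list m k (-1)) i m"
  define x' where "x' = prof (test_list m k (-1 - h)) i m"
  have hpos: "0 < h" and hle: "h \<le> 1" unfolding h_def by (auto simp: field_simps)
  have O: "OPT p n x = 0" unfolding x_def using p by (intro OPT_test_profile[OF _ n i]) simp
  have O': "-1 < OPT p n x'" "OPT p n x' < -g"
    unfolding x'_def using OPT_deviated_test_profile[OF p n i h_def g_def] by auto
  have "x(i := -1 - h) = x'" "x i = -1"
    unfolding x_def x'_def using n by (simp_all add: prof_update test_list_update prof_self)
      (simp add: test_list_def nth_append)
  then have "mech_exp p pO p1 p2 n x (\<lambda>y. \<bar>-1 - y\<bar>) \<le> mech_exp p pO p1 p2 n x' (\<lambda>y. \<bar>-1 - y\<bar>)"
    using SP i n unfolding strategyproof_def by (metis le_add2)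
  then have "pO n * (- OPT p n x') \<le> (p1 n i + p2 n (n - 1 - m)) * h"
    using test_deviation_cost[OF n i, of h p pO p1 p2] hpos hle O O' unfolding x_def x'_def by simp
  moreover have "pO n * g \<le> pO n * (- OPT p n x')" using O' pO0 by (intro mult_left_mono) auto
  moreover have "pO n * g = (pO n / (4 * 3 ^ (p - 2) * (real m + 1))) * h" unfolding g_def by simp
  ultimately show ?thesis using hpos by (metis mult_le_cancel_right_pos order.trans)
qed

text \<open>Summing the constraints over m = 0, ..., n div 2 - 1 for the least likely dictator i:
  the weight of OPT times a harmonic number is bounded, since the dictator weights and the
  order-statistic weights each sum to at most 1.\<close>
lemma OPT_weight_harmonic_bound:
  fixes pO :: "nat \<Rightarrow> real" and p1 p2 :: "nat \<Rightarrow> nat \<Rightarrow> real"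
  assumes p: "2 < p" and SP: "strategyproof p pO p1 p2" and n2: "2 \<le> n"
    and pO0: "0 \<le> pO n"
    and p10: "\<And>j. j < n \<Longrightarrow> 0 \<le> p1 n j"
    and p20: "\<And>j. j < n \<Longrightarrow> 0 \<le> p2 n j"
    and total: "pO n + (\<Sum>j<n. p1 n j) + (\<Sum>j<n. p2 n j) = 1"
  shows "pO n * harm (n div 2) \<le> 8 * 3 ^ (p - 2)"
proof -
  define M where "M = n div 2"
  define T :: real where "T = 4 * 3 ^ (p - 2)"
  have MN: "M \<le> n" and T: "0 < T" unfolding M_def T_def by auto
  have sum_p1: "(\<Sum>j<n. p1 n j) \<le> 1" and sum_p2: "(\<Sum>j<n. p2 n j) \<le> 1"
    using total pO0 sum_nonneg[of "{..<n}" "p1 n"] sum_nonneg[of "{..<n}" "p2 n"] p10 p20 by auto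
  define i where "i = arg_min_on (p1 n) {..<n}"
  have ne: "{..<n} \<noteq> {}" using n2 by (simp add: lessThan_empty_iff)
  have i: "i < n" unfolding i_def using arg_min_if_finite(1)[OF _ ne, of "p1 n"] by simp
  have i_min: "p1 n i \<le> p1 n j" if "j < n" for j
    unfolding i_def using arg_min_least[OF _ ne, of j "p1 n"] that by simp
  have "real M * p1 n i \<le> (\<Sum>j<n. p1 n i)" using MN p10[OF i] by (simp add: mult_right_mono)
  also have "\<dots> \<le> (\<Sum>j<n. p1 n j)" using i_min by (intro sum_mono) auto
  finally have dictators: "real M * p1 n i \<le> 1" using sum_p1 by simp
  have "(\<Sum>m<M. p2 n (n - 1 - m)) = (\<Sum>j\<in>(\<lambda>m. n - 1 - m) ` {..<M}. p2 n j)"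
    using MN by (subst sum.reindex) (auto intro: inj_onI)
  also have "\<dots> \<le> (\<Sum>j<n. p2 n j)" using MN n2 p20 by (intro sum_mono2) auto
  finally have statistics: "(\<Sum>m<M. p2 n (n - 1 - m)) \<le> 1" using sum_p2 by simp
  have "pO n * harm M / T = (\<Sum>m<M. pO n / (T * (real m + 1)))"
    by (simp add: harm_altdef sum_distrib_left sum_divide_distrib field_simps)
  also have "\<dots> \<le> (\<Sum>m<M. p1 n i + p2 n (n - 1 - m))"
  proof (rule sum_mono)
    fix m assume "m \<in> {..<M}"
    then have "n = 2 * m + (n - 2 - 2 * m) + 2" unfolding M_def by auto
    from strategyproof_test_bound[OF p SP pO0 this i]
    show "pO n / (T * (real m + 1)) \<le> p1 n i + p2 n (n - 1 - m)" by (simp add: T_def)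
  qed
  also have "\<dots> = real M * p1 n i + (\<Sum>m<M. p2 n (n - 1 - m))" by (simp add: sum.distrib)
  also have "\<dots> \<le> 2" using dictators statistics by simp
  finally show ?thesis using T unfolding M_def T_def by (simp add: divide_le_eq)
qed

text \<open>Consequently the weight of OPT on 2K agents tends to 0, as the harmonic numbers diverge.\<close>
lemma OPT_weight_vanishes:
  fixes pO :: "nat \<Rightarrow> real" and p1 p2 :: "nat \<Rightarrow> nat \<Rightarrow> real"
  assumes p: "2 < p" and SP: "strategyproof p pO p1 p2"
    and pO0: "\<And>n. 2 \<le> n \<Longrightarrow> 0 \<le> pO n"
    and p10: "\<And>n j. 2 \<le> n \<Longrightarrow> j < n \<Longrightarrow> 0 \<le> p1 n j"
    and p20: "\<And>n j. 2 \<le> n \<Longrightarrow> j < n \<Longrightarrow> 0 \<le> p2 n j"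
    and total: "\<And>n. 2 \<le> n \<Longrightarrow> pO n + (\<Sum>j<n. p1 n j) + (\<Sum>j<n. p2 n j) = 1"
  shows "(\<lambda>K. pO (2 * K)) \<longlonglongrightarrow> 0"
proof (rule tendsto_sandwich)
  define C :: real where "C = 8 * 3 ^ (p - 2)"
  have "eventually (\<lambda>K. pO (2 * K) * harm K \<le> C \<and> 0 < (harm K :: real)) sequentially"
    using eventually_ge_at_top[of 1] unfolding C_def
  proof eventually_elim
    case (elim K)
    then have "0 < (harm K :: real)" by (intro harm_pos) simp
    then show ?case using elim OPT_weight_harmonic_bound[OF p SP _ pO0 p10 p20 total, of "2 * K"]
      by simp
  qed
  then show "eventually (\<lambda>K. pO (2 * K) \<le> C / harm K) sequentially"
    by eventually_elim (simp add: le_divide_eq)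
  show "eventually (\<lambda>K. 0 \<le> pO (2 * K)) sequentially"
    using eventually_ge_at_top[of 1] by eventually_elim (simp add: pO0)
  show "(\<lambda>K. C / harm K) \<longlonglongrightarrow> 0"
    by (rule tendsto_divide_0[OF tendsto_const filterlim_at_top_imp_at_infinity[OF harm_at_top]])
qed simp

subsection \<open>The two-cluster profile and the final bound\<close>

lemma INF_sc_pt_eq_OPT:
  assumes p: "2 \<le> p" and n: "0 < n"
  shows "(INF y. sc_pt p n x y) = sc_pt p n x (OPT p n x)"
proof -
  have low: "sc_pt p n x (OPT p n x) \<le> sc_pt p n x y" for y
    unfolding sc_pt_def using OPT_minimises[OF p n, of x y] p by (simp add: real_root_le_mono)
  show ?thesis
  proof (rule antisym)
    show "(INF y. sc_pt p n x y) \<le> sc_pt p n x (OPT p n x)"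
      by (rule cINF_lower) (use low in \<open>auto simp: bdd_below_def\<close>)
    show "sc_pt p n x (OPT p n x) \<le> (INF y. sc_pt p n x y)"
      by (rule cINF_greatest) (use low in auto)
  qed
qed

lemma approx_ratio_ge_profile:
  "2 \<le> n \<Longrightarrow>
    ratio (mech_exp p pO p1 p2 n x (sc_pt p n x)) (INF y. sc_pt p n x y) \<le> approx_ratio p pO p1 p2"
  unfolding approx_ratio_def by (rule SUP_upper2[of "(n, x)"]) auto

lemma kth_largest_mem: "j < n \<Longrightarrow> kth_largest n x j \<in> x ` {..<n}"
proof -
  assume "j < n"
  then have "rev (sort (map x [0..<n])) ! j \<in> set (rev (sort (map x [0..<n])))"
    by (intro nth_mem) simp
  then show ?thesis by (simp add: kth_largest_def atLeast0LessThan)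
qed

definition two_cluster :: "nat \<Rightarrow> nat \<Rightarrow> real" where
  "two_cluster K j = (if j < K then 0 else 1)"

lemma sum_two_cluster: "(\<Sum>j<2 * K. f (two_cluster K j)) = real K * f 0 + real K * f 1"
proof -
  have "(\<Sum>j<2 * K. f (two_cluster K j)) = (\<Sum>j<K. f (two_cluster K j)) + (\<Sum>j\<in>{K..<2 * K}. f (two_cluster K j))"
    by (subst sum.union_disjoint[symmetric]) (auto intro: sum.cong)
  also have "\<dots> = (\<Sum>j<K. f 0) + (\<Sum>j\<in>{K..<2 * K}. f 1)"
    by (intro arg_cong2[where f="(+)"] sum.cong) (auto simp: two_cluster_def)
  finally show ?thesis by simp
qed

text \<open>The ratio between the social cost of a cluster point and of the midpoint.\<close>
lemma two_cluster_cost_ratio: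
  assumes p: "0 < p" and K: "1 \<le> K"
  shows "root p (real K) / root p (2 * real K * (1 / 2) ^ p) = 2 powr (1 - 1 / real p)"
proof -
  have "root p (real K) / root p (2 * real K * (1 / 2) ^ p) = root p (2 ^ p / 2)"
    using K by (simp add: real_root_divide[symmetric] field_simps)
  also have "\<dots> = (2 powr (real p - 1)) powr (1 / real p)"
    using p by (simp add: root_powr_inverse powr_diff powr_realpow)
  also have "\<dots> = 2 powr (1 - 1 / real p)"
    using p by (simp add: powr_powr field_simps)
  finally show ?thesis .
qed

text \<open>On the two-cluster profile OPT = 1/2, while every other outcome of the lottery is a cluster
  point whose cost is 2^(1-1/p) times the optimum.\<close>
lemma approx_ratio_ge_two_cluster:
  fixes pO :: "nat \<Rightarrow> real" and p1 p2 :: "nat \<Rightarrow> nat \<Rightarrow> real"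
  assumes p: "2 < p" and K: "1 \<le> K"
    and total: "pO (2 * K) + (\<Sum>j<2 * K. p1 (2 * K) j) + (\<Sum>j<2 * K. p2 (2 * K) j) = 1"
  shows "ereal (pO (2 * K) + (1 - pO (2 * K)) * 2 powr (1 - 1 / real p)) \<le> approx_ratio p pO p1 p2"
proof -
  define n where "n = 2 * K"
  define x where "x = two_cluster K"
  define S0 where "S0 = root p (2 * real K * (1 / 2) ^ p)"
  define S1 where "S1 = root p (real K)"
  have p2: "2 \<le> p" and p0: "0 < p" and n: "2 \<le> n" "0 < n" using p K unfolding n_def by auto
  have lp: "lp_obj p n x y = real K * \<bar>y\<bar> ^ p + real K * \<bar>1 - y\<bar> ^ p" for y
    using sum_two_cluster[of "\<lambda>a. \<bar>a - y\<bar> ^ p" K] unfolding lp_obj_def n_def x_def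
    by (simp add: abs_minus_commute)
  have O: "OPT p n x = 1 / 2"
  proof (rule OPT_eq_slope_zero[OF p2 n(2)])
    show "lp_slope p n x (1 / 2) = 0"
      using sum_two_cluster[of "\<lambda>a. spow p (1 / 2 - a)" K] spow_odd[of p "1 / 2"]
      unfolding lp_slope_def n_def x_def by simp
  qed
  have S0: "sc_pt p n x (OPT p n x) = S0" and S0pos: "0 < S0"
    unfolding O sc_pt_def S0_def lp using K p0 by simp_all
  have cluster: "sc_pt p n x a = S1" if "a \<in> x ` {..<n}" for a
    using that p0 unfolding sc_pt_def lp S1_def by (auto simp: x_def two_cluster_def zero_power)
  have "mech_exp p pO p1 p2 n x (sc_pt p n x)
      = pO n * S0 + ((\<Sum>j<n. p1 n j) + (\<Sum>j<n. p2 n j)) * S1"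
    unfolding mech_exp_def S0 using cluster kth_largest_mem[of _ n x]
    by (simp add: sum_distrib_right distrib_right)
  also have "\<dots> = pO n * S0 + (1 - pO n) * S1"
  proof -
    have "(\<Sum>j<n. p1 n j) + (\<Sum>j<n. p2 n j) = 1 - pO n" using total unfolding n_def by linarith
    then show ?thesis by simp
  qed
  also have "\<dots> = S0 * (pO n + (1 - pO n) * (S1 / S0))"
    using S0pos by (simp add: field_simps)
  finally have "ratio (mech_exp p pO p1 p2 n x (sc_pt p n x)) (INF y. sc_pt p n x y)
      = ereal (pO n + (1 - pO n) * 2 powr (1 - 1 / real p))"
    using S0pos two_cluster_cost_ratio[OF p0 K] unfolding ratio_def INF_sc_pt_eq_OPT[OF p2 n(2)] S0
    by (simp add: S0_def S1_def)
  then show ?thesis using approx_ratio_ge_profile[OF n(1)] unfolding n_def by metis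
qed

theorem mainTheorem6:
  fixes p :: nat and pO :: "nat \<Rightarrow> real" and p1 p2 :: "nat \<Rightarrow> nat \<Rightarrow> real"
  assumes "p > 2"
    and "\<And>n. n \<ge> 2 \<Longrightarrow> pO n \<ge> 0"
    and "\<And>n j. n \<ge> 2 \<Longrightarrow> j < n \<Longrightarrow> p1 n j \<ge> 0"
    and "\<And>n j. n \<ge> 2 \<Longrightarrow> j < n \<Longrightarrow> p2 n j \<ge> 0"
    and "\<And>n. n \<ge> 2 \<Longrightarrow> pO n + (\<Sum>j<n. p1 n j) + (\<Sum>j<n. p2 n j) = 1"
    and "strategyproof p pO p1 p2"
  shows "approx_ratio p pO p1 p2 \<ge> ereal (2 powr (1 - 1 / real p))"
proof -
  define c where "c = 2 powr (1 - 1 / real p)"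
  have "(\<lambda>K. pO (2 * K)) \<longlonglongrightarrow> 0"
    by (rule OPT_weight_vanishes[OF assms(1,6,2-5)])
  then have "(\<lambda>K. ereal (pO (2 * K) + (1 - pO (2 * K)) * c)) \<longlonglongrightarrow> ereal (0 + (1 - 0) * c)"
    by (intro tendsto_intros)
  then have limit: "(\<lambda>K. ereal (pO (2 * K) + (1 - pO (2 * K)) * c)) \<longlonglongrightarrow> ereal c" by simp
  have "\<forall>K\<ge>1. ereal (pO (2 * K) + (1 - pO (2 * K)) * c) \<le> approx_ratio p pO p1 p2"
    unfolding c_def using approx_ratio_ge_two_cluster[OF assms(1)] assms(5) by simp
  then show ?thesis unfolding c_def[symmetric] by (intro LIMSEQ_le_const2[OF limit]) blast
qed

end
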